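(* Let $k\ge1$ and $n$ be integers, and suppose that neither $0$ nor $k-1$ lies in the tail of $G(n,k)$. Then $G(n,k)$ has a cycle $C'$ containing both $k-1$ and $(n-3)_{k+1}$, and a cycle $C''$ containing both $0$ and $(n-1)_{k+1}$. Moreover, $C'$ is longer (has more edges) than the tail.
   Context: For an integer $\ell$, $\ell_k$ and $\ell_{k+1}$ denote the least nonnegative residues of $\ell$ modulo $k$ and $k+1$. $G(n,k)$ is the directed graph on vertices $0,1,\dots,k$ whose edges are exactly the $k$ edges $(i+n-2)_{k+1}\to(i+n-1)_k$, $1\le i\le k$; a loop $a\to a$ counts as a cycle of length $1$. Vertex $k$ has in-degree $0$, vertex $(n-2)_{k+1}$ has out-degree $0$, and all other vertices have in- and out-degree $1$, so $G(n,k)$ is a disjoint union of directed cycles and one directed path, the tail, from $k$ to $(n-2)_{k+1}$ (of length $0$ if $k=(n-2)_{k+1}$). Lengths are numbers of edges. *)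

theory Defs
  imports Main
begin

text \<open>Edges of G(n,k): (i+n-2) mod (k+1) -> (i+n-1) mod k for 1 <= i <= k.
  Vertices are integers 0..k; int mod with positive divisor is the least nonnegative residue.\<close>
definition Gedges :: "int \<Rightarrow> int \<Rightarrow> (int \<times> int) set" where
  "Gedges n k = {((i + n - 2) mod (k + 1), (i + n - 1) mod k) | i. 1 \<le> i \<and> i \<le> k}"

text \<open>A directed cycle: nonempty list of distinct vertices, each joined to the next cyclically.
  Its length (number of edges) is the length of the list; a loop is a cycle of length 1.\<close>
definition is_cycle :: "int \<Rightarrow> int \<Rightarrow> int list \<Rightarrow> bool" where
  "is_cycle n k c \<longleftrightarrow> c \<noteq> [] \<and> distinct c \<and>
     (\<forall>i < length c. (c ! i, c ! ((i + 1) mod length c)) \<in> Gedges n k)"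

text \<open>The tail: the directed path (list of distinct vertices) from k to (n-2) mod (k+1).
  Its length (number of edges) is length of the list minus 1.\<close>
definition is_tail :: "int \<Rightarrow> int \<Rightarrow> int list \<Rightarrow> bool" where
  "is_tail n k p \<longleftrightarrow> p \<noteq> [] \<and> distinct p \<and> hd p = k \<and> last p = (n - 2) mod (k + 1) \<and>
     (\<forall>i. i + 1 < length p \<longrightarrow> (p ! i, p ! (i + 1)) \<in> Gedges n k)"

end

theory Submission
  imports Defs "HOL-Combinatorics.Orbits"
begin

(* Gluing the source k onto the sink t = (n-2) mod (k+1) turns G(n,k) into a permutation \<sigma>
   of {0..<k} whose cycles are those of G(n,k) together with the tail, closed up at t; the
   vertices (n-3) mod (k+1) and (n-1) mod (k+1) are t - 1 and t + 1 modulo k + 1.  If t = k the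
   tail is just the vertex k and there is nothing to prove.  Otherwise, away from t - 1, t and
   k - 1 the permutation commutes with x \<mapsto> x + 1 (mod k), while \<sigma> t = \<sigma> (k-1) + 1
   and \<sigma> 0 = \<sigma> t + 1.  So the orbit of t runs one step above the orbit of k - 1, and
   the orbit of 0 one step above the orbit of t, until the lower orbit meets an exceptional
   point.  As 0 and k - 1 are not on the tail, the orbit of k - 1 must first meet t - 1, by which
   time the tail has already closed, so the cycle of k - 1 is longer; and the orbit of t must
   first return to t - 1 or t, which puts t + 1 on the cycle of 0. *)

definition orbit_list :: "('a \<Rightarrow> 'a) \<Rightarrow> 'a \<Rightarrow> 'a list" where
  "orbit_list f x = map (\<lambda>i. (f ^^ i) x) [0..<funpow_dist1 f x x]"

lemma length_orbit_list [simp]: "length (orbit_list f x) = funpow_dist1 f x x"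
  by (simp add: orbit_list_def)

lemma orbit_list_nth_mod:
  assumes "permutation f"
  shows "orbit_list f x ! (i mod length (orbit_list f x)) = (f ^^ i) x"
proof -
  define d where "d = funpow_dist1 f x x"
  have "(f ^^ d) x = x"
    unfolding d_def by (rule funpow_dist1_prop[OF permutation_self_in_orbit[OF assms]])
  moreover have "i mod d < d"
    unfolding d_def by simp
  ultimately show ?thesis
    by (simp add: orbit_list_def d_def[symmetric] funpow_mod_eq del: upt_Suc)
qed

lemma set_orbit_list:
  assumes "permutation f"
  shows "set (orbit_list f x) = orbit f x"
  using orbit_conv_funpow_dist1[OF permutation_self_in_orbit[OF assms]]
  by (simp add: orbit_list_def atLeast0LessThan del: upt_Suc)

lemma distinct_orbit_list:
  assumes "permutation f"
  shows "distinct (orbit_list f x)"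
  using inj_on_funpow_dist1[OF permutation_self_in_orbit[OF assms]]
  by (simp add: orbit_list_def distinct_map atLeast0LessThan del: upt_Suc)

lemma orbit_list_nth_Suc_mod:
  assumes "permutation f" "i < length (orbit_list f x)"
  shows "orbit_list f x ! (Suc i mod length (orbit_list f x)) = f (orbit_list f x ! i)"
proof -
  have "orbit_list f x ! (Suc i mod length (orbit_list f x)) = (f ^^ Suc i) x"
    by (rule orbit_list_nth_mod[OF assms(1)])
  also have "\<dots> = f (orbit_list f x ! i)"
    using assms(2) by (simp add: orbit_list_def del: upt_Suc)
  finally show ?thesis .
qed

lemma rotate1_orbit_list_nth:
  assumes "permutation f" "i < length (orbit_list f x)"
  shows "rotate1 (orbit_list f x) ! i = (f ^^ Suc i) x"
  by (simp only: nth_rotate1[OF assms(2)] orbit_list_nth_mod[OF assms(1)])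

lemma funpow_in_orbit_pos: "0 < j \<Longrightarrow> (f ^^ j) x \<in> orbit f x"
  unfolding orbit_altdef by blast

lemma funpow_commute_on:
  assumes "\<And>x. x \<in> A \<Longrightarrow> f (h x) = h (f x)" and "\<forall>j<i. (f ^^ j) x \<in> A"
  shows "(f ^^ i) (h x) = h ((f ^^ i) x)"
  using assms(2) by (induction i) (simp_all add: assms(1))

lemma first_hit_commute:
  assumes commute: "\<And>x. x \<in> A \<Longrightarrow> f (h x) = h (f x)"
    and start: "f u = h (f v)"
    and hit: "0 < m" "(f ^^ m) v \<in> C"
    and avoid: "\<And>j. 0 < j \<Longrightarrow> (f ^^ j) v \<notin> C \<Longrightarrow> (f ^^ j) v \<in> A"
  obtains i where "0 < i" "i \<le> m" "(f ^^ i) v \<in> C" "(f ^^ i) u = h ((f ^^ i) v)"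
proof -
  define i where "i = (LEAST i. 0 < i \<and> (f ^^ i) v \<in> C)"
  have i: "0 < i" "(f ^^ i) v \<in> C"
    using LeastI[of "\<lambda>i. 0 < i \<and> (f ^^ i) v \<in> C", OF conjI[OF hit]] by (simp_all add: i_def)
  have "i \<le> m"
    unfolding i_def by (rule Least_le) (use hit in simp)
  have orbit_in_A: "\<forall>j<i - 1. (f ^^ j) (f v) \<in> A"
  proof (intro allI impI)
    fix j assume "j < i - 1"
    then have "(f ^^ Suc j) v \<notin> C"
      using not_less_Least[of "Suc j" "\<lambda>i. 0 < i \<and> (f ^^ i) v \<in> C"] by (simp add: i_def)
    then show "(f ^^ j) (f v) \<in> A"
      using avoid[of "Suc j"] by (simp add: funpow_swap1)
  qed
  have "(f ^^ (i - 1)) (f u) = h ((f ^^ (i - 1)) (f v))"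
    unfolding start using commute orbit_in_A by (rule funpow_commute_on)
  moreover obtain i' where "i = Suc i'"
    using \<open>0 < i\<close> gr0_implies_Suc by blast
  ultimately have "(f ^^ i) u = h ((f ^^ i) v)"
    by (simp add: funpow_swap1)
  then show ?thesis
    by (rule that[OF i(1) \<open>i \<le> m\<close> i(2)])
qed

lemma single_valued_paths_common_prefix:
  assumes "single_valued E" "hd p = hd q" "p \<noteq> []" "q \<noteq> []"
    and "\<forall>i. i + 1 < length p \<longrightarrow> (p ! i, p ! (i + 1)) \<in> E"
    and "\<forall>i. i + 1 < length q \<longrightarrow> (q ! i, q ! (i + 1)) \<in> E"
  shows "i < length p \<Longrightarrow> i < length q \<Longrightarrow> p ! i = q ! i"
proof (induction i)
  case 0
  then show ?case using assms(2-4) by (simp add: hd_conv_nth)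
next
  case (Suc i)
  then have "p ! i = q ! i"
    by simp
  moreover have "(p ! i, p ! Suc i) \<in> E" "(q ! i, q ! Suc i) \<in> E"
    using assms(5,6) Suc.prems by simp_all
  ultimately show ?case
    using single_valuedD[OF assms(1)] by metis
qed

lemma mod_eq_in_window:
  fixes i j c m :: int
  assumes "(i + c) mod m = (j + c) mod m" "a \<le> i" "i < a + m" "a \<le> j" "j < a + m"
  shows "i = j"
proof (rule ccontr)
  assume "i \<noteq> j"
  have "m dvd i - j"
    using assms(1) by (simp add: mod_eq_dvd_iff)
  then have "\<bar>m\<bar> \<le> \<bar>i - j\<bar>"
    using \<open>i \<noteq> j\<close> by (intro dvd_imp_le_int) auto
  with assms(2-5) show False
    by linarith
qed

lemma single_valued_Gedges: "single_valued (Gedges n k)"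
proof (rule single_valuedI)
  fix x y z assume "(x, y) \<in> Gedges n k" "(x, z) \<in> Gedges n k"
  then obtain i j where "1 \<le> i" "i \<le> k" "1 \<le> j" "j \<le> k"
    and "(i + (n - 2)) mod (k + 1) = (j + (n - 2)) mod (k + 1)"
    and "y = (i + n - 1) mod k" "z = (j + n - 1) mod k"
    unfolding Gedges_def by (auto simp: add_diff_eq)
  then show "y = z"
    using mod_eq_in_window[of i "n - 2" "k + 1" j 1] by simp
qed

lemma single_valued_converse_Gedges: "single_valued ((Gedges n k)\<inverse>)"
proof (rule single_valuedI)
  fix x y z assume "(x, y) \<in> (Gedges n k)\<inverse>" "(x, z) \<in> (Gedges n k)\<inverse>"
  then obtain i j where "1 \<le> i" "i \<le> k" "1 \<le> j" "j \<le> k"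
    and "(i + (n - 1)) mod k = (j + (n - 1)) mod k"
    and "y = (i + n - 2) mod (k + 1)" "z = (j + n - 2) mod (k + 1)"
    unfolding Gedges_def by (auto simp: add_diff_eq)
  then show "y = z"
    using mod_eq_in_window[of i "n - 1" k j 1] by simp
qed

definition sink :: "int \<Rightarrow> int \<Rightarrow> int" where
  "sink n k = (n - 2) mod (k + 1)"

definition edge_index :: "int \<Rightarrow> int \<Rightarrow> int \<Rightarrow> int" where
  "edge_index n k y = (y - n + 1) mod (k + 1) + 1"

definition out_nbr :: "int \<Rightarrow> int \<Rightarrow> int \<Rightarrow> int" where
  "out_nbr n k y = (edge_index n k y + n - 1) mod k"

lemma edge_index_source: "(edge_index n k y + n - 2) mod (k + 1) = y mod (k + 1)"
proof -
  have "edge_index n k y + n - 2 = (y - n + 1) mod (k + 1) + (n - 1)"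
    by (simp add: edge_index_def)
  then show ?thesis
    by (simp only: mod_add_left_eq) simp
qed

lemma edge_index_eq_iff_sink:
  assumes "0 \<le> k"
  shows "edge_index n k y = k + 1 \<longleftrightarrow> y mod (k + 1) = sink n k"
proof -
  have "edge_index n k y = k + 1 \<longleftrightarrow> (y - n + 1) mod (k + 1) = (- 1) mod (k + 1)"
    using zmod_minus1[of "k + 1"] assms by (simp add: edge_index_def)
  also have "\<dots> \<longleftrightarrow> (k + 1) dvd y - (n - 2)"
    by (simp add: mod_eq_dvd_iff algebra_simps)
  also have "\<dots> \<longleftrightarrow> y mod (k + 1) = sink n k"
    by (simp add: mod_eq_dvd_iff sink_def)
  finally show ?thesis .
qed

lemma edge_index_bounds:
  assumes "0 \<le> k"
  shows "1 \<le> edge_index n k y" "edge_index n k y \<le> k + 1"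
  using assms pos_mod_bound[of "k + 1" "y - n + 1"] by (simp_all add: edge_index_def)

lemma out_nbr_edge:
  assumes "0 \<le> y" "y \<le> k" "y \<noteq> sink n k"
  shows "(y, out_nbr n k y) \<in> Gedges n k"
proof -
  have "y mod (k + 1) = y"
    using assms by simp
  then have "1 \<le> edge_index n k y" "edge_index n k y \<le> k"
    using edge_index_bounds[of k n y] edge_index_eq_iff_sink[of k n y] assms by auto
  moreover have "y = (edge_index n k y + n - 2) mod (k + 1)"
    using edge_index_source \<open>y mod (k + 1) = y\<close> by simp
  ultimately show ?thesis
    unfolding Gedges_def out_nbr_def by blast
qed

lemma out_nbr_Suc:
  assumes "0 < k" "y mod (k + 1) \<noteq> sink n k"
  shows "out_nbr n k (y + 1) = (out_nbr n k y + 1) mod k"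
proof -
  define r where "r = (y - n + 1) mod (k + 1)"
  have "r + 1 \<le> k"
    using edge_index_bounds[of k n y] edge_index_eq_iff_sink[of k n y] assms
    by (auto simp: edge_index_def r_def)
  have "(y + 1 - n + 1) mod (k + 1) = (r + 1) mod (k + 1)"
    unfolding r_def mod_add_left_eq by (simp add: algebra_simps)
  also have "\<dots> = r + 1"
    using \<open>r + 1 \<le> k\<close> assms(1) by (simp add: r_def)
  finally have "edge_index n k (y + 1) = edge_index n k y + 1"
    by (simp add: edge_index_def r_def)
  then show ?thesis
    unfolding out_nbr_def mod_add_left_eq by simp
qed

lemma out_nbr_range: "0 < k \<Longrightarrow> out_nbr n k y \<in> {0..<k}"
  by (simp add: out_nbr_def)

definition succ_perm :: "int \<Rightarrow> int \<Rightarrow> int \<Rightarrow> int" where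
  "succ_perm n k x = (if x \<in> {0..<k} then out_nbr n k (if x = sink n k then k else x) else x)"

lemma succ_perm_edge:
  assumes "x \<in> {0..<k}"
  shows "(if x = sink n k then k else x, succ_perm n k x) \<in> Gedges n k"
  using assms out_nbr_edge[of "if x = sink n k then k else x" k n] by (auto simp: succ_perm_def)

lemma succ_perm_permutes:
  assumes "0 < k"
  shows "succ_perm n k permutes {0..<k}"
proof (rule bij_imp_permutes)
  have maps: "succ_perm n k ` {0..<k} \<subseteq> {0..<k}"
    using out_nbr_range[OF assms] by (auto simp: succ_perm_def)
  have "inj_on (succ_perm n k) {0..<k}"
  proof (rule inj_onI)
    fix x y assume xy: "x \<in> {0..<k}" "y \<in> {0..<k}" "succ_perm n k x = succ_perm n k y"
    then have "(if x = sink n k then k else x) = (if y = sink n k then k else y)"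
      using succ_perm_edge[of x k n] succ_perm_edge[of y k n]
        single_valuedD[OF single_valued_converse_Gedges] by simp
    with xy(1,2) show "x = y"
      by (auto split: if_splits)
  qed
  with maps show "bij_betw (succ_perm n k) {0..<k} {0..<k}"
    by (simp add: bij_betw_def endo_inj_surj)
qed (auto simp: succ_perm_def)

lemma permutation_succ_perm: "0 < k \<Longrightarrow> permutation (succ_perm n k)"
  using permutes_imp_permutation[OF finite_atLeastLessThan_int succ_perm_permutes] .

lemma orbit_succ_perm_subset: "0 < k \<Longrightarrow> x \<in> {0..<k} \<Longrightarrow> orbit (succ_perm n k) x \<subseteq> {0..<k}"
  using permutes_orbit_subset[OF succ_perm_permutes] .

lemma succ_perm_Suc_mod:
  assumes "0 < k" "x \<in> {0..<k} - {sink n k - 1, sink n k, k - 1}"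
  shows "succ_perm n k ((x + 1) mod k) = (succ_perm n k x + 1) mod k"
  using assms out_nbr_Suc[of k x n] by (simp add: succ_perm_def)

lemma succ_perm_sink:
  assumes "0 < k" "sink n k < k - 1"
  shows "succ_perm n k (sink n k) = (succ_perm n k (k - 1) + 1) mod k"
proof -
  have "0 \<le> sink n k"
    using assms(1) by (simp add: sink_def)
  then show ?thesis
    using assms out_nbr_Suc[of k "k - 1" n] by (simp add: succ_perm_def)
qed

lemma succ_perm_zero:
  assumes "0 < k" "0 < sink n k" "sink n k < k"
  shows "succ_perm n k 0 = (succ_perm n k (sink n k) + 1) mod k"
proof -
  have "k + 1 - n + 1 = (0 - n + 1) + (k + 1)"
    by simp
  then have "out_nbr n k 0 = out_nbr n k (k + 1)"
    unfolding out_nbr_def edge_index_def by (simp only: mod_add_self2)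
  then show ?thesis
    using assms out_nbr_Suc[of k k n] by (simp add: succ_perm_def)
qed

lemma is_cycle_orbit_list:
  assumes "0 < k" "x \<in> {0..<k}" "sink n k \<notin> orbit (succ_perm n k) x"
  shows "is_cycle n k (orbit_list (succ_perm n k) x)"
proof -
  let ?l = "orbit_list (succ_perm n k) x"
  note perm = permutation_succ_perm[OF assms(1), of n]
  have "(?l ! i, ?l ! (Suc i mod length ?l)) \<in> Gedges n k" if "i < length ?l" for i
  proof -
    have "?l ! i \<in> orbit (succ_perm n k) x"
      using that set_orbit_list[OF perm] nth_mem by blast
    then have "?l ! i \<in> {0..<k}" "?l ! i \<noteq> sink n k"
      using orbit_succ_perm_subset[OF assms(1,2), of n] assms(3) by auto
    then show ?thesis
      using succ_perm_edge[of "?l ! i" k n] orbit_list_nth_Suc_mod[OF perm that] by simp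
  qed
  moreover have "?l \<noteq> []"
    by (simp add: orbit_list_def del: upt_Suc)
  ultimately show ?thesis
    unfolding is_cycle_def using distinct_orbit_list[OF perm] by simp
qed

lemma is_tail_glued_orbit:
  assumes "0 < k" "sink n k < k"
  shows "is_tail n k (k # rotate1 (orbit_list (succ_perm n k) (sink n k)))"
proof -
  let ?f = "succ_perm n k" and ?t = "sink n k"
  let ?l = "orbit_list ?f ?t"
  note perm = permutation_succ_perm[OF assms(1), of n]
  have t: "?t \<in> {0..<k}"
    using assms by (simp add: sink_def)
  have orbit_range: "orbit ?f ?t \<subseteq> {0..<k}"
    using orbit_succ_perm_subset[OF assms(1) t] .
  have "?l \<noteq> []"
    by (simp add: orbit_list_def del: upt_Suc)
  moreover have "?l ! 0 = ?t"
    using orbit_list_nth_mod[OF perm, of ?t 0] by simp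
  ultimately have l: "rotate1 ?l = tl ?l @ [?t]"
    by (simp add: rotate1_hd_tl hd_conv_nth)
  have "k \<notin> set ?l"
    using orbit_range set_orbit_list[OF perm] by auto
  then have "distinct (k # rotate1 ?l)"
    using distinct_orbit_list[OF perm] by simp
  moreover have "last (k # rotate1 ?l) = (n - 2) mod (k + 1)"
    using l by (simp add: sink_def)
  moreover have "((k # rotate1 ?l) ! i, (k # rotate1 ?l) ! (i + 1)) \<in> Gedges n k"
    if "i + 1 < length (k # rotate1 ?l)" for i
  proof (cases i)
    case 0
    then show ?thesis
      using succ_perm_edge[OF t, of n] rotate1_orbit_list_nth[OF perm, of 0 ?t] by simp
  next
    case (Suc j)
    let ?y = "(?f ^^ Suc j) ?t"
    have j: "Suc j < funpow_dist1 ?f ?t ?t"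
      using that Suc by simp
    have "?y \<in> orbit ?f ?t"
      unfolding orbit_altdef by blast
    moreover have "?y \<noteq> ?t"
      using funpow_dist1_least[OF _ j] by simp
    ultimately have "(?y, ?f ?y) \<in> Gedges n k"
      using succ_perm_edge[of ?y k n] orbit_range by auto
    then show ?thesis
      using Suc j rotate1_orbit_list_nth[OF perm] by simp
  qed
  ultimately show ?thesis
    unfolding is_tail_def by simp
qed

lemma is_tail_unique:
  assumes "is_tail n k p" "is_tail n k q"
  shows "p = q"
proof -
  have same_prefix: "p ! i = q ! i"
    if "is_tail n k p" "is_tail n k q" "i < length p" "i < length q" for p q i
    using that single_valued_paths_common_prefix[OF single_valued_Gedges, of p q n k i]
    unfolding is_tail_def by argo
  have length_le: "length p \<le> length q" if "is_tail n k p" "is_tail n k q" for p q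
  proof (rule ccontr)
    assume longer: "\<not> length p \<le> length q"
    have "p \<noteq> []" "q \<noteq> []" "distinct p" "last p = last q"
      using that unfolding is_tail_def by simp_all
    have "p ! (length q - 1) = q ! (length q - 1)"
      using same_prefix[OF that] longer \<open>q \<noteq> []\<close> by simp
    also have "\<dots> = p ! (length p - 1)"
      using \<open>p \<noteq> []\<close> \<open>q \<noteq> []\<close> \<open>last p = last q\<close> by (simp add: last_conv_nth)
    finally have "length q - 1 = length p - 1"
      using \<open>distinct p\<close> \<open>q \<noteq> []\<close> longer by (simp add: nth_eq_iff_index_eq)
    moreover have "0 < length q"
      using \<open>q \<noteq> []\<close> by simp
    ultimately show False
      using longer by linarith
  qed
  show ?thesis
    using length_le[OF assms] length_le[OF assms(2,1)] same_prefix[OF assms]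
    by (auto intro: nth_equalityI)
qed

lemma is_tail_sink_top:
  assumes "sink n k = k" "is_tail n k p"
  shows "length p = 1"
proof -
  have "p \<noteq> []" "distinct p" "hd p = last p"
    using assms unfolding is_tail_def sink_def by simp_all
  then have "p ! 0 = p ! (length p - 1)"
    by (simp add: hd_conv_nth last_conv_nth)
  with \<open>p \<noteq> []\<close> \<open>distinct p\<close> show ?thesis
    by (simp add: nth_eq_iff_index_eq le_Suc_eq)
qed

locale tail_avoids_ends =
  fixes n k :: int
  assumes k_pos: "0 < k"
    and sink_lt: "sink n k < k"
    and tail_avoids: "\<forall>p. is_tail n k p \<longrightarrow> 0 \<notin> set p \<and> k - 1 \<notin> set p"
begin

abbreviation \<sigma> :: "int \<Rightarrow> int" where
  "\<sigma> \<equiv> succ_perm n k"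

lemma permutation_\<sigma>: "permutation \<sigma>"
  using permutation_succ_perm[OF k_pos] .

lemma sink_in_orbit_sink: "sink n k \<in> orbit \<sigma> (sink n k)"
  using permutation_self_in_orbit[OF permutation_\<sigma>] .

lemma glued_tail: "is_tail n k (k # rotate1 (orbit_list \<sigma> (sink n k)))"
  using is_tail_glued_orbit[OF k_pos sink_lt] .

lemma ends_notin_orbit_sink: "0 \<notin> orbit \<sigma> (sink n k)" "k - 1 \<notin> orbit \<sigma> (sink n k)"
  using tail_avoids glued_tail set_orbit_list[OF permutation_\<sigma>] by auto

lemma sink_bounds: "0 < sink n k" "sink n k < k - 1"
proof -
  have "0 \<le> sink n k"
    using k_pos by (simp add: sink_def)
  moreover have "sink n k \<noteq> 0" "sink n k \<noteq> k - 1"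
    using ends_notin_orbit_sink sink_in_orbit_sink by metis+
  ultimately show "0 < sink n k" "sink n k < k - 1"
    using sink_lt by linarith+
qed

lemma sink_notin_orbit_ends: "sink n k \<notin> orbit \<sigma> 0" "sink n k \<notin> orbit \<sigma> (k - 1)"
  using orbit_swap[OF permutation_self_in_orbit[OF permutation_\<sigma>]] ends_notin_orbit_sink by blast+

lemma orbit_sink_subset: "x \<in> orbit \<sigma> (sink n k) \<Longrightarrow> x \<in> {0..<k}"
  using orbit_succ_perm_subset[OF k_pos, of "sink n k" n] sink_bounds by auto

lemma orbit_last_subset: "x \<in> orbit \<sigma> (k - 1) \<Longrightarrow> x \<in> {0..<k}"
  using orbit_succ_perm_subset[OF k_pos, of "k - 1" n] k_pos by auto

lemma pred_sink_in_orbit_last: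
  shows "sink n k - 1 \<in> orbit \<sigma> (k - 1)"
    and "funpow_dist1 \<sigma> (sink n k) (sink n k) < funpow_dist1 \<sigma> (k - 1) (k - 1)"
proof -
  let ?t = "sink n k" and ?P = "funpow_dist1 \<sigma> (k - 1) (k - 1)"
  have P: "(\<sigma> ^^ ?P) (k - 1) = k - 1"
    using funpow_dist1_prop[OF permutation_self_in_orbit[OF permutation_\<sigma>]] .
  obtain i where i: "0 < i" "i \<le> ?P" "(\<sigma> ^^ i) (k - 1) \<in> {?t - 1, k - 1}"
    and shadow: "(\<sigma> ^^ i) ?t = ((\<sigma> ^^ i) (k - 1) + 1) mod k"
  proof (rule first_hit_commute[of "{0..<k} - {?t - 1, ?t, k - 1}" \<sigma> "\<lambda>x. (x + 1) mod k"])
    show "\<sigma> ((x + 1) mod k) = (\<sigma> x + 1) mod k" if "x \<in> {0..<k} - {?t - 1, ?t, k - 1}" for x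
      using succ_perm_Suc_mod[OF k_pos that] .
    show "\<sigma> ?t = (\<sigma> (k - 1) + 1) mod k"
      using succ_perm_sink[OF k_pos sink_bounds(2)] .
    show "(\<sigma> ^^ ?P) (k - 1) \<in> {?t - 1, k - 1}"
      using P by simp
    show "(\<sigma> ^^ j) (k - 1) \<in> {0..<k} - {?t - 1, ?t, k - 1}"
      if "0 < j" "(\<sigma> ^^ j) (k - 1) \<notin> {?t - 1, k - 1}" for j
    proof -
      have "(\<sigma> ^^ j) (k - 1) \<in> orbit \<sigma> (k - 1)"
        using funpow_in_orbit_pos[OF that(1)] .
      then have "(\<sigma> ^^ j) (k - 1) \<in> {0..<k}" "(\<sigma> ^^ j) (k - 1) \<noteq> ?t"
        using orbit_last_subset sink_notin_orbit_ends(2) by auto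
      with that(2) show ?thesis
        by simp
    qed
  qed simp_all
  have "(\<sigma> ^^ i) ?t \<noteq> 0"
    using funpow_in_orbit_pos[OF i(1)] ends_notin_orbit_sink(1) by metis
  then have hit: "(\<sigma> ^^ i) (k - 1) = ?t - 1"
    using i(3) shadow by auto
  then show "?t - 1 \<in> orbit \<sigma> (k - 1)"
    using funpow_in_orbit_pos[OF i(1)] by metis
  have "(\<sigma> ^^ i) ?t = ?t"
    using shadow hit sink_bounds by simp
  then have "funpow_dist1 \<sigma> ?t ?t \<le> i"
    using funpow_dist1_le_self[OF _ i(1) sink_in_orbit_sink] by simp
  moreover have "i \<noteq> ?P"
    using hit P sink_bounds by auto
  ultimately show "funpow_dist1 \<sigma> ?t ?t < ?P"
    using i(2) by simp
qed

lemma Suc_sink_in_orbit_zero: "sink n k + 1 \<in> orbit \<sigma> 0"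
proof -
  let ?t = "sink n k" and ?P = "funpow_dist1 \<sigma> (sink n k) (sink n k)"
  obtain i where i: "0 < i" "(\<sigma> ^^ i) ?t \<in> {?t - 1, ?t}"
    and shadow: "(\<sigma> ^^ i) 0 = ((\<sigma> ^^ i) ?t + 1) mod k"
  proof (rule first_hit_commute[of "{0..<k} - {?t - 1, ?t, k - 1}" \<sigma> "\<lambda>x. (x + 1) mod k"])
    show "\<sigma> ((x + 1) mod k) = (\<sigma> x + 1) mod k" if "x \<in> {0..<k} - {?t - 1, ?t, k - 1}" for x
      using succ_perm_Suc_mod[OF k_pos that] .
    show "\<sigma> 0 = (\<sigma> ?t + 1) mod k"
      using succ_perm_zero[OF k_pos sink_bounds(1) sink_lt] .
    show "(\<sigma> ^^ ?P) ?t \<in> {?t - 1, ?t}"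
      using funpow_dist1_prop[OF sink_in_orbit_sink] by simp
    show "(\<sigma> ^^ j) ?t \<in> {0..<k} - {?t - 1, ?t, k - 1}"
      if "0 < j" "(\<sigma> ^^ j) ?t \<notin> {?t - 1, ?t}" for j
    proof -
      have "(\<sigma> ^^ j) ?t \<in> orbit \<sigma> ?t"
        using funpow_in_orbit_pos[OF that(1)] .
      then have "(\<sigma> ^^ j) ?t \<in> {0..<k}" "(\<sigma> ^^ j) ?t \<noteq> k - 1"
        using orbit_sink_subset ends_notin_orbit_sink(2) by auto
      with that(2) show ?thesis
        by simp
    qed
  qed simp_all
  have "(\<sigma> ^^ i) 0 \<noteq> ?t"
    using funpow_in_orbit_pos[OF i(1)] sink_notin_orbit_ends(1) by metis
  then have "(\<sigma> ^^ i) 0 = ?t + 1"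
    using i(2) shadow sink_bounds by auto
  then show ?thesis
    using funpow_in_orbit_pos[OF i(1)] by metis
qed

lemma tail_length_lt_period_last:
  assumes "is_tail n k p"
  shows "length p - 1 < funpow_dist1 \<sigma> (k - 1) (k - 1)"
  using is_tail_unique[OF assms glued_tail] pred_sink_in_orbit_last(2) by simp

end

theorem lemma3p8:
  fixes n k :: int
  assumes "k \<ge> 1"
    and "\<forall>p. is_tail n k p \<longrightarrow> 0 \<notin> set p \<and> k - 1 \<notin> set p"
  shows "(\<exists>C'. is_cycle n k C' \<and> k - 1 \<in> set C' \<and> (n - 3) mod (k + 1) \<in> set C' \<and>
             (\<forall>p. is_tail n k p \<longrightarrow> length C' > length p - 1))
       \<and> (\<exists>C''. is_cycle n k C'' \<and> 0 \<in> set C'' \<and> (n - 1) mod (k + 1) \<in> set C'')"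
proof -
  let ?\<sigma> = "succ_perm n k" and ?t = "sink n k"
  have k: "0 < k"
    using assms(1) by simp
  have ends: "k - 1 \<in> {0..<k}" "0 \<in> {0..<k}"
    using k by simp_all
  have n3: "(n - 3) mod (k + 1) = (?t - 1) mod (k + 1)"
    and n1: "(n - 1) mod (k + 1) = (?t + 1) mod (k + 1)"
    by (simp_all add: sink_def mod_simps)
  have "?t \<notin> orbit ?\<sigma> (k - 1) \<and> ?t \<notin> orbit ?\<sigma> 0 \<and>
      (n - 3) mod (k + 1) \<in> orbit ?\<sigma> (k - 1) \<and> (n - 1) mod (k + 1) \<in> orbit ?\<sigma> 0 \<and>
      (\<forall>p. is_tail n k p \<longrightarrow> length p - 1 < funpow_dist1 ?\<sigma> (k - 1) (k - 1))"
  proof (cases "?t = k")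
    case True
    then show ?thesis
      using n3 n1 k orbit_succ_perm_subset[OF k ends(1), of n] orbit_succ_perm_subset[OF k ends(2), of n]
        permutation_self_in_orbit[OF permutation_succ_perm[OF k]] is_tail_sink_top
      by auto
  next
    case False
    then have "?t < k"
      using k pos_mod_bound[of "k + 1" "n - 2"] by (simp add: sink_def)
    then interpret tail_avoids_ends n k
      using k assms(2) by unfold_locales
    show ?thesis
      using n3 n1 sink_bounds sink_notin_orbit_ends pred_sink_in_orbit_last(1)
        Suc_sink_in_orbit_zero tail_length_lt_period_last by simp
  qed
  then show ?thesis
    using is_cycle_orbit_list[OF k ends(1)] is_cycle_orbit_list[OF k ends(2)]
      set_orbit_list[OF permutation_succ_perm[OF k]]
      permutation_self_in_orbit[OF permutation_succ_perm[OF k]]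
    by (metis length_orbit_list)
qed

end
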